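(* Fix an integer $\ell\ge 1$. Then for all $p=O(n)$, $D^p(\textsc{Sub}(C_{2\ell+1}))=\tilde O(n^2/p)$.
   Context: $C_k$ is the cycle on $k$ vertices. Insertion-only streaming model: the edges of an $n$-vertex undirected input graph $G$ arrive as a stream in arbitrary order; the algorithm knows $n$, makes $p$ passes, and has $S$ bits of memory. $\textsc{Sub}(H)$: decide whether $G$ contains $H$ as a subgraph and if so output the vertex set of a copy. $D^p(\Pi)$ is the minimum space of a deterministic $p$-pass streaming algorithm solving $\Pi$. $\tilde O$ hides polylogarithmic factors in $n$. *)

theory Defs
  imports Complex_Main
begin

definition is_edge :: "nat \<Rightarrow> nat set \<Rightarrow> bool" where
  "is_edge n e \<longleftrightarrow> (\<exists>u v. u \<noteq> v \<and> u < n \<and> v < n \<and> e = {u, v})"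

definition cycle_copy :: "nat \<Rightarrow> nat set set \<Rightarrow> (nat \<Rightarrow> nat) \<Rightarrow> bool" where
  "cycle_copy k G f \<longleftrightarrow> inj_on f {0..<k} \<and>
     (\<forall>i<k. {f i, f (Suc i mod k)} \<in> G)"

text \<open>A deterministic streaming algorithm: (init, step, between, out).
  init is the initial memory state, step i q e the state after reading edge e
  in pass i from state q, between i q the (arbitrary) computation done at the
  start of pass i, out the final output (None = no copy, Some V = vertex set).\<close>
type_synonym stream_alg =
  "nat \<times> (nat \<Rightarrow> nat \<Rightarrow> nat set \<Rightarrow> nat) \<times> (nat \<Rightarrow> nat \<Rightarrow> nat) \<times> (nat \<Rightarrow> nat set option)"

text \<open>S bits of memory: every memory state is one of 2^S states.\<close>
definition uses_space :: "nat \<Rightarrow> stream_alg \<Rightarrow> bool" where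
  "uses_space S A = (case A of (init, step, betw, out) \<Rightarrow>
     init < 2 ^ S \<and> (\<forall>i q e. q < 2 ^ S \<longrightarrow> step i q e < 2 ^ S) \<and>
     (\<forall>i q. q < 2 ^ S \<longrightarrow> betw i q < 2 ^ S))"

definition run_pass :: "stream_alg \<Rightarrow> nat set list \<Rightarrow> nat \<Rightarrow> nat \<Rightarrow> nat" where
  "run_pass A xs i q = (case A of (init, step, betw, out) \<Rightarrow>
     foldl (\<lambda>s e. step i s e) (betw i q) xs)"

definition run_alg :: "stream_alg \<Rightarrow> nat \<Rightarrow> nat set list \<Rightarrow> nat set option" where
  "run_alg A p xs = (case A of (init, step, betw, out) \<Rightarrow>
     out (foldl (\<lambda>q i. run_pass A xs i q) init [0..<p]))"

definition solves_sub_cycle :: "nat \<Rightarrow> nat \<Rightarrow> nat \<Rightarrow> stream_alg \<Rightarrow> bool" where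
  "solves_sub_cycle k n p A \<longleftrightarrow>
     (\<forall>xs. distinct xs \<and> (\<forall>e\<in>set xs. is_edge n e) \<longrightarrow>
        (case run_alg A p xs of
           None \<Rightarrow> \<not> (\<exists>f. cycle_copy k (set xs) f)
         | Some V \<Rightarrow> (\<exists>f. cycle_copy k (set xs) f \<and> V = f ` {0..<k})))"

definition D_sub_cycle :: "nat \<Rightarrow> nat \<Rightarrow> nat \<Rightarrow> nat" where
  "D_sub_cycle k n p = (LEAST S. \<exists>A. uses_space S A \<and> solves_sub_cycle k n p A)"

end

(*
  Derandomised colour coding, spread over passes. If the vertices are coloured with
  0, ..., k - 1 so that a copy of C_k is coloured 0, 1, ..., k - 1 along the cycle, a round of
  k passes finds it: for every source of colour 0, phase c extends walks ending in colour c
  along the streamed edges to vertices of colour c + 1, keeping one walk per endpoint, and the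
  last phase closes a walk by an edge back to its source. Distinct colours make such a closed
  walk a cycle. Reading k - 1 bits of the vertex names and comparing with k bit patterns gives
  b^(k-1) 2^(k(k-1)) colourings (b = log n + 1), among which every k-set is coloured in any
  prescribed way. Treating the sources in blocks of t costs O(t n k log n) bits for the walks
  and k |colourings| n / t passes; taking t of order n k |colourings| / p gives the bound
  O(n^2 / p polylog n). When p is too small even for t = n, storing the graph (n^2 bits) is
  within the bound.
*)

theory Submission
  imports Defs "HOL-Library.FuncSet" "HOL-Library.Discrete_Functions"
begin

definition cycle_vertex_set :: "nat \<Rightarrow> nat set set \<Rightarrow> nat set \<Rightarrow> bool" where
  "cycle_vertex_set k G V \<longleftrightarrow> (\<exists>f. cycle_copy k G f \<and> V = f ` {0..<k})"

definition correct_cycle_output :: "nat \<Rightarrow> nat set set \<Rightarrow> nat set option \<Rightarrow> bool" where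
  "correct_cycle_output k G r = (case r of
      None \<Rightarrow> \<not> (\<exists>f. cycle_copy k G f)
    | Some V \<Rightarrow> cycle_vertex_set k G V)"

lemma solves_sub_cycle_iff:
  "solves_sub_cycle k n p A \<longleftrightarrow>
    (\<forall>xs. distinct xs \<and> (\<forall>e\<in>set xs. is_edge n e) \<longrightarrow>
       correct_cycle_output k (set xs) (run_alg A p xs))"
  unfolding solves_sub_cycle_def correct_cycle_output_def cycle_vertex_set_def ..

primrec run_passes ::
  "'s \<Rightarrow> (nat \<Rightarrow> 's \<Rightarrow> nat set \<Rightarrow> 's) \<Rightarrow> (nat \<Rightarrow> 's \<Rightarrow> 's) \<Rightarrow> nat set list \<Rightarrow> nat \<Rightarrow> 's" where
  "run_passes init step betw xs 0 = init"
| "run_passes init step betw xs (Suc i) = foldl (step i) (betw i (run_passes init step betw xs i)) xs"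

lemma foldl_invariant:
  assumes "\<And>q e. e \<in> set ys \<Longrightarrow> P q \<Longrightarrow> P (g q e)" and "P q"
  shows "P (foldl g q ys)"
  using assms by (induction ys arbitrary: q) auto

lemma foldl_invariant_after_event:
  assumes "e0 \<in> set ys"
    and "\<And>q e. e \<in> set ys \<Longrightarrow> P q \<Longrightarrow> P (g q e)"
    and "\<And>q. P q \<Longrightarrow> R (g q e0)"
    and "\<And>q e. e \<in> set ys \<Longrightarrow> R q \<Longrightarrow> R (g q e)"
    and "P q"
  shows "R (foldl g q ys)"
  using assms
proof (induction ys arbitrary: q)
  case (Cons a ys)
  show ?case
  proof (cases "a = e0")
    case True
    then show ?thesis
      using Cons.prems foldl_invariant[of ys R g "g q a"] by simp
  next
    case False
    then show ?thesis using Cons by simp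
  qed
qed simp

lemma D_sub_cycle_le_of_state_space:
  fixes Q :: "'s set"
  assumes fin: "finite Q" and card: "card Q \<le> 2 ^ S" and init: "init \<in> Q"
    and step: "\<And>i q e. q \<in> Q \<Longrightarrow> step i q e \<in> Q"
    and betw: "\<And>i q. q \<in> Q \<Longrightarrow> betw i q \<in> Q"
    and correct: "\<And>xs. distinct xs \<Longrightarrow> \<forall>e\<in>set xs. is_edge n e \<Longrightarrow>
      correct_cycle_output k (set xs) (out (run_passes init step betw xs p))"
  shows "D_sub_cycle k n p \<le> S"
proof -
  obtain h where h: "bij_betw h Q {0..<card Q}"
    using ex_bij_betw_finite_nat[OF fin] by blast
  define dec where "dec = the_inv_into Q h"
  have h_Q: "h q < card Q" if "q \<in> Q" for q
    using h that by (auto simp: bij_betw_def)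
  have dec_h: "dec (h q) = q" if "q \<in> Q" for q
    using h that by (simp add: dec_def bij_betw_def the_inv_into_f_f)
  have dec_Q: "dec m \<in> Q" if "m < card Q" for m
    using h that by (auto simp: dec_def bij_betw_def intro: the_inv_into_into)
  define A :: stream_alg where "A =
    (h init,
     \<lambda>i q e. if q < card Q then h (step i (dec q) e) else 0,
     \<lambda>i q. if q < card Q then h (betw i (dec q)) else 0,
     \<lambda>q. out (dec q))"
  have h_lt: "h q < 2 ^ S" if "q \<in> Q" for q
    using h_Q[OF that] card by linarith
  have space: "uses_space S A"
    using init step betw dec_Q h_lt by (auto simp: uses_space_def A_def)
  have pass: "foldl (\<lambda>s e. if s < card Q then h (step i (dec s) e) else 0) (h q) ys
      = h (foldl (step i) q ys) \<and> foldl (step i) q ys \<in> Q" if "q \<in> Q" for q i ys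
    using that by (induction ys arbitrary: q) (auto simp: h_Q dec_h step)
  have passes: "foldl (\<lambda>q i. run_pass A xs i q) (h init) [0..<m]
      = h (run_passes init step betw xs m) \<and> run_passes init step betw xs m \<in> Q" for m xs
    by (induction m) (auto simp: init run_pass_def A_def h_Q dec_h betw pass)
  have "run_alg A p xs = out (run_passes init step betw xs p)" for xs
    using passes[where m = p and xs = xs] dec_h by (simp add: run_alg_def A_def)
  then have "solves_sub_cycle k n p A"
    using correct by (simp add: solves_sub_cycle_iff)
  with space show ?thesis
    unfolding D_sub_cycle_def by (blast intro: Least_le)
qed

section \<open>Storing the whole graph\<close>

lemma finite_edges: "finite {e. is_edge n e}"
  and card_edges_le: "card {e. is_edge n e} \<le> n * n"
proof -
  have sub: "{e. is_edge n e} \<subseteq> (\<lambda>(u, v). {u, v}) ` ({0..<n} \<times> {0..<n})"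
    by (auto simp: is_edge_def)
  then show "finite {e. is_edge n e}"
    by (rule finite_subset) simp
  have "card {e. is_edge n e} \<le> card ((\<lambda>(u, v). {u, v}) ` ({0..<n} \<times> {0..<n}))"
    by (rule card_mono[OF _ sub]) simp
  also have "\<dots> \<le> n * n"
    using card_image_le[of "{0..<n} \<times> {0..<n}" "\<lambda>(u, v). {u, v}"] by simp
  finally show "card {e. is_edge n e} \<le> n * n" .
qed

lemma D_sub_cycle_le_square:
  assumes "p \<ge> 1"
  shows "D_sub_cycle k n p \<le> n * n"
proof -
  define step :: "nat \<Rightarrow> nat set set \<Rightarrow> nat set \<Rightarrow> nat set set" where
    "step = (\<lambda>i E e. if is_edge n e then insert e E else E)"
  define out :: "nat set set \<Rightarrow> nat set option" where
    "out = (\<lambda>E. if \<exists>f. cycle_copy k E f then Some ((SOME f. cycle_copy k E f) ` {0..<k}) else None)"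
  have stored: "foldl (step i) E ys = E \<union> set ys" if "\<forall>e\<in>set ys. is_edge n e" for i E ys
    using that by (induction ys arbitrary: E) (auto simp: step_def)
  have run: "run_passes {} step (\<lambda>i q. q) xs m = (if m = 0 then {} else set xs)"
    if "\<forall>e\<in>set xs. is_edge n e" for m xs
    using that by (induction m) (auto simp: stored)
  show ?thesis
  proof (rule D_sub_cycle_le_of_state_space[where Q = "Pow {e. is_edge n e}"])
    show "card (Pow {e. is_edge n e}) \<le> 2 ^ (n * n)"
      using finite_edges card_edges_le by (simp add: card_Pow power_increasing)
    fix xs :: "nat set list" assume "\<forall>e\<in>set xs. is_edge n e"
    then show "correct_cycle_output k (set xs) (out (run_passes {} step (\<lambda>i q. q) xs p))"
      using run assms
      by (auto simp: out_def correct_cycle_output_def cycle_vertex_set_def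
          intro: someI_ex[where P = "cycle_copy k (set xs)"])
  qed (auto simp: finite_edges step_def)
qed

section \<open>Colourings separating \<open>k\<close>-sets\<close>

definition bit_pattern :: "nat list \<Rightarrow> nat \<Rightarrow> bool list" where
  "bit_pattern cs x = map (bit x) cs"

lemma length_bit_pattern [simp]: "length (bit_pattern cs x) = length cs"
  by (simp add: bit_pattern_def)

lemma bit_pattern_append: "bit_pattern (cs @ ds) x = bit_pattern cs x @ bit_pattern ds x"
  by (simp add: bit_pattern_def)

lemma ex_bit_less_neq:
  fixes x y :: nat
  assumes "x \<noteq> y" "x < 2 ^ b" "y < 2 ^ b"
  shows "\<exists>c<b. bit x c \<noteq> bit y c"
proof -
  obtain c where c: "bit x c \<noteq> bit y c"
    using assms(1) bit_eq_iff by blast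
  have "bit x c \<longleftrightarrow> c < b \<and> bit x c" "bit y c \<longleftrightarrow> c < b \<and> bit y c"
    using assms(2,3) by (metis bit_take_bit_iff take_bit_nat_eq_self)+
  with c show ?thesis by auto
qed

text \<open>Splitting along one distinguishing bit and recursing on both halves uses
  \<open>1 + (card T\<^sub>0 - 1) + (card T\<^sub>1 - 1) = card T - 1\<close> bits.\<close>

lemma bit_pattern_separates:
  assumes "finite T" "T \<subseteq> {..<2 ^ b}"
  shows "\<exists>cs. length cs \<le> card T - 1 \<and> set cs \<subseteq> {..<b} \<and> inj_on (bit_pattern cs) T"
  using assms
proof (induction "card T" arbitrary: T rule: less_induct)
  case less
  show ?case
  proof (cases "card T \<le> 1")
    case True
    then have "inj_on (bit_pattern []) T"
      using card_le_Suc0_iff_eq[OF less.prems(1)] by (auto simp: inj_on_def)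
    then show ?thesis by (intro exI[of _ "[]"]) simp
  next
    case False
    then obtain x y where xy: "x \<in> T" "y \<in> T" "x \<noteq> y"
      using card_le_Suc0_iff_eq[OF less.prems(1)] by auto
    then obtain c where c: "c < b" "bit x c \<noteq> bit y c"
      using ex_bit_less_neq[of x y b] less.prems(2) by auto
    define T0 where "T0 = {z\<in>T. \<not> bit z c}"
    define T1 where "T1 = {z\<in>T. bit z c}"
    have fin: "finite T0" "finite T1"
      using less.prems(1) by (auto simp: T0_def T1_def)
    have nonempty: "T0 \<noteq> {}" "T1 \<noteq> {}"
      using xy c by (auto simp: T0_def T1_def)
    have "T = T0 \<union> T1" "T0 \<inter> T1 = {}"
      by (auto simp: T0_def T1_def)
    then have card_T: "card T = card T0 + card T1"
      using card_Un_disjoint[OF fin] by simp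
    have card_pos: "card T0 \<ge> 1" "card T1 \<ge> 1"
      using fin nonempty by (auto simp: Suc_le_eq card_gt_0_iff)
    obtain cs0 where cs0: "length cs0 \<le> card T0 - 1" "set cs0 \<subseteq> {..<b}" "inj_on (bit_pattern cs0) T0"
      using less.hyps[of T0] fin less.prems(2) card_T card_pos by (auto simp: T0_def)
    obtain cs1 where cs1: "length cs1 \<le> card T1 - 1" "set cs1 \<subseteq> {..<b}" "inj_on (bit_pattern cs1) T1"
      using less.hyps[of T1] fin less.prems(2) card_T card_pos by (auto simp: T1_def)
    have "inj_on (bit_pattern (c # cs0 @ cs1)) T"
    proof (rule inj_onI)
      fix z w assume zw: "z \<in> T" "w \<in> T" "bit_pattern (c # cs0 @ cs1) z = bit_pattern (c # cs0 @ cs1) w"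
      then have same: "bit z c = bit w c" "bit_pattern cs0 z = bit_pattern cs0 w"
          "bit_pattern cs1 z = bit_pattern cs1 w"
        by (auto simp: bit_pattern_def)
      show "z = w"
      proof (cases "bit z c")
        case True
        then have "z \<in> T1" "w \<in> T1" using zw same by (auto simp: T1_def)
        then show ?thesis using cs1(3) same by (auto dest: inj_onD)
      next
        case False
        then have "z \<in> T0" "w \<in> T0" using zw same by (auto simp: T0_def)
        then show ?thesis using cs0(3) same by (auto dest: inj_onD)
      qed
    qed
    moreover have "length (c # cs0 @ cs1) \<le> card T - 1"
      using cs0 cs1 card_T card_pos by simp
    ultimately show ?thesis
      using cs0 cs1 c by (intro exI[of _ "c # cs0 @ cs1"]) auto
  qed
qed

definition colour :: "nat list \<times> bool list list \<Rightarrow> nat \<Rightarrow> nat option" where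
  "colour \<phi> x = (case \<phi> of (cs, ps) \<Rightarrow>
     if bit_pattern cs x \<in> set ps then Some (LEAST i. ps ! i = bit_pattern cs x) else None)"

definition colourings :: "nat \<Rightarrow> nat \<Rightarrow> (nat list \<times> bool list list) list" where
  "colourings k b = List.product (List.n_lists (k - 1) [0..<b])
     (List.n_lists k (List.n_lists (k - 1) [False, True]))"

lemma length_colourings: "length (colourings k b) = b ^ (k - 1) * 2 ^ ((k - 1) * k)"
proof -
  have len: "length (List.n_lists m xs) = length xs ^ m" for m and xs :: "'a list"
    by (induction m) (auto simp: length_concat comp_def sum_list_triv)
  show ?thesis
    by (simp add: colourings_def len numeral_2_eq_2 flip: power_mult)
qed

lemma colour_distinct_nth:
  assumes "distinct ps" "i < length ps" "bit_pattern cs x = ps ! i"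
  shows "colour (cs, ps) x = Some i"
proof -
  have "(LEAST j. ps ! j = bit_pattern cs x) = i"
  proof (rule Least_equality)
    fix j assume "ps ! j = bit_pattern cs x"
    then show "i \<le> j"
      using assms nth_eq_iff_index_eq[of ps i j] by (cases "j < length ps") auto
  qed (use assms in simp)
  then show ?thesis
    using assms by (auto simp: colour_def)
qed

theorem colourful_colouring_exists:
  assumes "k \<ge> 1" "b \<ge> 1" "inj_on f {0..<k}" "\<forall>i<k. f i < 2 ^ b"
  shows "\<exists>\<phi>\<in>set (colourings k b). \<forall>i<k. colour \<phi> (f i) = Some i"
proof -
  have card_image: "card (f ` {0..<k}) = k"
    using assms(3) by (simp add: card_image)
  moreover have "f ` {0..<k} \<subseteq> {..<2 ^ b}"
    using assms(4) by auto
  ultimately obtain cs where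
    cs: "length cs \<le> k - 1" "set cs \<subseteq> {..<b}" "inj_on (bit_pattern cs) (f ` {0..<k})"
    using bit_pattern_separates[of "f ` {0..<k}" b] by auto
  define cs' where "cs' = cs @ replicate (k - 1 - length cs) 0"
  have inj': "inj_on (bit_pattern cs') (f ` {0..<k})"
    using cs(3) by (auto simp: inj_on_def cs'_def bit_pattern_append)
  define ps where "ps = map (\<lambda>i. bit_pattern cs' (f i)) [0..<k]"
  have "distinct ps"
    using inj' assms(3) by (auto simp: ps_def distinct_map inj_on_def)
  moreover have "(cs', ps) \<in> set (colourings k b)"
    using cs assms(2) by (auto simp: colourings_def set_n_lists cs'_def ps_def bit_pattern_def)
  ultimately show ?thesis
    by (intro bexI[of _ "(cs', ps)"]) (auto intro: colour_distinct_nth simp: ps_def)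
qed

section \<open>Colourful walks\<close>

definition colourful_walk :: "nat set set \<Rightarrow> (nat \<Rightarrow> nat option) \<Rightarrow> nat list \<Rightarrow> bool" where
  "colourful_walk G \<chi> ps \<longleftrightarrow>
     (\<forall>i<length ps. \<chi> (ps ! i) = Some i) \<and> (\<forall>i. Suc i < length ps \<longrightarrow> {ps ! i, ps ! Suc i} \<in> G)"

lemma colourful_walk_length:
  assumes "colourful_walk G \<chi> ps" "ps \<noteq> []" "\<chi> (last ps) = Some c"
  shows "length ps = Suc c"
  using assms by (auto simp: colourful_walk_def last_conv_nth)

lemma colourful_walk_snoc:
  assumes "colourful_walk G \<chi> ps" "ps \<noteq> []" "\<chi> u = Some (length ps)" "{last ps, u} \<in> G"
  shows "colourful_walk G \<chi> (ps @ [u])"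
  unfolding colourful_walk_def
proof (intro conjI allI impI)
  fix i assume "i < length (ps @ [u])"
  then show "\<chi> ((ps @ [u]) ! i) = Some i"
    using assms(1,3) by (auto simp: colourful_walk_def nth_append less_Suc_eq)
next
  fix i assume i: "Suc i < length (ps @ [u])"
  show "{(ps @ [u]) ! i, (ps @ [u]) ! Suc i} \<in> G"
  proof (cases "Suc i < length ps")
    case True
    then show ?thesis using assms(1) by (simp add: colourful_walk_def nth_append)
  next
    case False
    then have "i = length ps - 1" using i by simp
    then show ?thesis using assms(2,4) by (simp add: nth_append last_conv_nth)
  qed
qed

text \<open>The colours make a closed colourful walk a cycle: its vertices are pairwise distinct.\<close>

lemma cycle_vertex_set_of_colourful_walk:
  assumes "colourful_walk G \<chi> ps" "ps \<noteq> []" "{last ps, hd ps} \<in> G"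
  shows "cycle_vertex_set (length ps) G (set ps)"
proof -
  let ?k = "length ps"
  have "cycle_copy ?k G (nth ps)"
    unfolding cycle_copy_def
  proof (intro conjI allI impI)
    show "inj_on (nth ps) {0..<?k}"
      using assms(1) by (intro inj_onI) (metis atLeastLessThan_iff colourful_walk_def option.inject)
    fix i assume "i < ?k"
    then consider "Suc i < ?k" | "Suc i = ?k" by linarith
    then show "{ps ! i, ps ! (Suc i mod ?k)} \<in> G"
    proof cases
      case 1
      then show ?thesis using assms(1) by (simp add: colourful_walk_def)
    next
      case 2
      then have "i = ?k - 1" by simp
      then show ?thesis
        using 2 assms(2,3) by (simp add: last_conv_nth hd_conv_nth)
    qed
  qed
  moreover have "set ps = nth ps ` {0..<?k}"
    by (auto simp: set_conv_nth image_def)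
  ultimately show ?thesis
    by (auto simp: cycle_vertex_set_def)
qed

definition other_end :: "nat set \<Rightarrow> nat \<Rightarrow> nat" where
  "other_end e u = the_elem (e - {u})"

lemma is_edge_other_end:
  assumes "is_edge n e" "u \<in> e"
  shows "e = {other_end e u, u}" "other_end e u \<noteq> u"
  using assms by (auto simp: is_edge_def other_end_def insert_Diff_if)

lemma other_end_insert: "w \<noteq> u \<Longrightarrow> other_end {w, u} u = w"
  by (simp add: other_end_def insert_Diff_if)

lemma cycle_copy_vertex_less:
  assumes "cycle_copy k G f" "\<forall>e\<in>G. is_edge n e" "i < k"
  shows "f i < n"
  using assms unfolding cycle_copy_def is_edge_def by (metis doubleton_eq_iff)

lemma sum_powers_le_Suc_power: "(\<Sum>i\<le>k. n ^ i) \<le> (Suc n :: nat) ^ k"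
proof (induction k)
  case (Suc k)
  have "(\<Sum>i\<le>Suc k. n ^ i) = 1 + n * (\<Sum>i\<le>k. n ^ i)"
    by (simp only: sum.atMost_Suc_shift power_0 power_Suc sum_distrib_left)
  also have "\<dots> \<le> Suc n ^ k + n * Suc n ^ k"
    using Suc.IH by (intro add_mono mult_le_mono2) simp_all
  finally show ?case by simp
qed simp

lemma card_functions_with_default_le:
  assumes "finite D" "finite B"
  shows "finite {f. (\<forall>x\<in>D. f x \<in> B) \<and> (\<forall>x. x \<notin> D \<longrightarrow> f x = d)}" (is "finite ?F")
    and "card {f. (\<forall>x\<in>D. f x \<in> B) \<and> (\<forall>x. x \<notin> D \<longrightarrow> f x = d)} \<le> card B ^ card D"
proof -
  have inj: "inj_on (\<lambda>f. restrict f D) ?F"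
  proof (rule inj_onI)
    fix f g assume f: "f \<in> ?F" and g: "g \<in> ?F" and eq: "restrict f D = restrict g D"
    show "f = g"
    proof
      fix x
      show "f x = g x"
      proof (cases "x \<in> D")
        case True
        then show ?thesis using eq by (metis restrict_apply')
      qed (use f g in simp)
    qed
  qed
  have sub: "(\<lambda>f. restrict f D) ` ?F \<subseteq> PiE D (\<lambda>_. B)"
    by auto
  have fin: "finite (PiE D (\<lambda>_. B))"
    using assms by (simp add: finite_PiE)
  then show "finite ?F"
    using finite_subset[OF sub] inj by (blast dest: finite_imageD)
  have "card ?F \<le> card (PiE D (\<lambda>_. B))"
    using card_inj_on_le[OF inj sub fin] .
  also have "\<dots> = card B ^ card D"
    using assms(1) by (simp add: card_PiE)
  finally show "card ?F \<le> card B ^ card D" .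
qed

section \<open>The colour-coding algorithm\<close>

text \<open>Pass \<open>i\<close> is phase \<open>i mod k\<close> of round \<open>i div k\<close>; round \<open>j\<close> uses the colouring
  \<open>fm ! (j mod length fm)\<close> and the block of sources \<open>j div length fm * t + s\<close>, \<open>s < t\<close>.
  A state is the vertex set of a cycle found so far together with a table whose entry
  \<open>(s, u)\<close> is a colourful walk from the \<open>s\<close>-th source to \<open>u\<close>, or \<open>[]\<close>.\<close>

type_synonym cc_state = "nat set option \<times> (nat \<times> nat \<Rightarrow> nat list)"

locale colour_coding =
  fixes n k t :: nat and fm :: "(nat list \<times> bool list list) list"
  assumes two_le_k: "2 \<le> k"
begin

definition round_colour :: "nat \<Rightarrow> nat \<Rightarrow> nat option" where
  "round_colour j = colour (fm ! (j mod length fm))"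

definition round_source :: "nat \<Rightarrow> nat \<Rightarrow> nat" where
  "round_source j s = j div length fm * t + s"

definition start_walks :: "(nat \<Rightarrow> nat option) \<Rightarrow> (nat \<Rightarrow> nat) \<Rightarrow> nat \<times> nat \<Rightarrow> nat list" where
  "start_walks \<chi> src = (\<lambda>(s, u). if s < t \<and> u < n \<and> u = src s \<and> \<chi> u = Some 0 then [u] else [])"

text \<open>The guards \<open>u < n\<close> and \<open>length \<dots> < k\<close> never fail on a valid stream; they keep the
  table within the bounded state space \<open>cc_states\<close> below.\<close>

definition extend_walks ::
  "(nat \<Rightarrow> nat option) \<Rightarrow> nat \<Rightarrow> (nat \<times> nat \<Rightarrow> nat list) \<Rightarrow> nat set \<Rightarrow> nat \<times> nat \<Rightarrow> nat list" where
  "extend_walks \<chi> c T e = (\<lambda>(s, u).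
     if u \<in> e \<and> u < n \<and> \<chi> u = Some (Suc c) \<and> \<chi> (other_end e u) = Some c \<and>
        T (s, other_end e u) \<noteq> [] \<and> length (T (s, other_end e u)) < k
     then T (s, other_end e u) @ [u] else T (s, u))"

definition closes_cycle ::
  "(nat \<Rightarrow> nat option) \<Rightarrow> (nat \<Rightarrow> nat) \<Rightarrow> (nat \<times> nat \<Rightarrow> nat list) \<Rightarrow> nat set \<Rightarrow> nat \<times> nat \<Rightarrow> bool" where
  "closes_cycle \<chi> src T e = (\<lambda>(s, w). T (s, w) \<noteq> [] \<and> \<chi> w = Some (k - 1) \<and> w \<noteq> src s \<and> e = {w, src s})"

definition close_cycle ::
  "(nat \<Rightarrow> nat option) \<Rightarrow> (nat \<Rightarrow> nat) \<Rightarrow> (nat \<times> nat \<Rightarrow> nat list) \<Rightarrow> nat set \<Rightarrow> nat set option \<Rightarrow> nat set option" where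
  "close_cycle \<chi> src T e found =
     (if \<exists>x. closes_cycle \<chi> src T e x then Some (set (T (SOME x. closes_cycle \<chi> src T e x))) else found)"

definition cc_between :: "nat \<Rightarrow> cc_state \<Rightarrow> cc_state" where
  "cc_between i q =
     (if i mod k = 0 then (fst q, start_walks (round_colour (i div k)) (round_source (i div k))) else q)"

definition cc_step :: "nat \<Rightarrow> cc_state \<Rightarrow> nat set \<Rightarrow> cc_state" where
  "cc_step i q e =
     (if Suc (i mod k) < k then (fst q, extend_walks (round_colour (i div k)) (i mod k) (snd q) e)
      else (close_cycle (round_colour (i div k)) (round_source (i div k)) (snd q) e (fst q), snd q))"

definition cc_run :: "nat set list \<Rightarrow> nat \<Rightarrow> cc_state" where
  "cc_run xs = run_passes (None, \<lambda>_. []) cc_step cc_between xs"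

lemma cc_run_Suc: "cc_run xs (Suc i) = foldl (cc_step i) (cc_between i (cc_run xs i)) xs"
  by (simp add: cc_run_def)

definition colourful_table ::
  "nat set set \<Rightarrow> (nat \<Rightarrow> nat option) \<Rightarrow> (nat \<Rightarrow> nat) \<Rightarrow> (nat \<times> nat \<Rightarrow> nat list) \<Rightarrow> bool" where
  "colourful_table G \<chi> src T \<longleftrightarrow> (\<forall>s u. T (s, u) \<noteq> [] \<longrightarrow>
     hd (T (s, u)) = src s \<and> last (T (s, u)) = u \<and> colourful_walk G \<chi> (T (s, u)))"

lemma colourful_table_start_walks: "colourful_table G \<chi> src (start_walks \<chi> src)"
  by (auto simp: colourful_table_def start_walks_def colourful_walk_def)

lemma colourful_table_extend_walks:
  assumes "e \<in> G" "is_edge n e" "colourful_table G \<chi> src T"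
  shows "colourful_table G \<chi> src (extend_walks \<chi> c T e)"
  unfolding colourful_table_def
proof (intro allI impI)
  fix s u
  let ?w = "other_end e u" and ?ps = "T (s, other_end e u)"
  show "hd (extend_walks \<chi> c T e (s, u)) = src s \<and> last (extend_walks \<chi> c T e (s, u)) = u \<and>
      colourful_walk G \<chi> (extend_walks \<chi> c T e (s, u))" if "extend_walks \<chi> c T e (s, u) \<noteq> []"
  proof (cases "u \<in> e \<and> u < n \<and> \<chi> u = Some (Suc c) \<and> \<chi> ?w = Some c \<and> ?ps \<noteq> [] \<and> length ?ps < k")
    case True
    then have walk: "hd ?ps = src s" "last ?ps = ?w" "colourful_walk G \<chi> ?ps"
      using assms(3) by (auto simp: colourful_table_def)
    then have "length ?ps = Suc c"
      using True colourful_walk_length by auto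
    moreover have "{last ?ps, u} \<in> G"
      using walk True is_edge_other_end[OF assms(2)] assms(1) by auto
    ultimately have "colourful_walk G \<chi> (?ps @ [u])"
      using walk True by (intro colourful_walk_snoc) auto
    then show ?thesis
      using True walk by (simp add: extend_walks_def)
  next
    case False
    then have "extend_walks \<chi> c T e (s, u) = T (s, u)"
      by (auto simp: extend_walks_def)
    then show ?thesis
      using that assms(3) by (simp add: colourful_table_def)
  qed
qed

lemma close_cycle_sound:
  assumes "e \<in> G" "colourful_table G \<chi> src T" "pred_option (cycle_vertex_set k G) found"
  shows "pred_option (cycle_vertex_set k G) (close_cycle \<chi> src T e found)"
proof (cases "\<exists>x. closes_cycle \<chi> src T e x")
  case True
  obtain s w where sw: "closes_cycle \<chi> src T e (s, w)" "(SOME x. closes_cycle \<chi> src T e x) = (s, w)"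
    using someI_ex[OF True] by (metis surj_pair)
  let ?ps = "T (s, w)"
  have walk: "?ps \<noteq> []" "hd ?ps = src s" "last ?ps = w" "colourful_walk G \<chi> ?ps"
    using sw(1) assms(2) by (auto simp: closes_cycle_def colourful_table_def)
  have "length ?ps = k"
    using colourful_walk_length[OF walk(4,1)] sw(1) walk(3) two_le_k by (simp add: closes_cycle_def)
  moreover have "{last ?ps, hd ?ps} \<in> G"
    using walk sw(1) assms(1) by (simp add: closes_cycle_def)
  ultimately show ?thesis
    using cycle_vertex_set_of_colourful_walk[OF walk(4,1)] sw(2) True
    by (simp add: close_cycle_def)
qed (use assms(3) in \<open>simp add: close_cycle_def\<close>)

lemma cc_run_sound:
  assumes "\<forall>e\<in>set xs. is_edge n e"
  shows "pred_option (cycle_vertex_set k (set xs)) (fst (cc_run xs i)) \<and>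
    (i mod k \<noteq> 0 \<longrightarrow>
      colourful_table (set xs) (round_colour (i div k)) (round_source (i div k)) (snd (cc_run xs i)))"
proof (induction i)
  case 0
  then show ?case by (simp add: cc_run_def)
next
  case (Suc i)
  let ?inv = "\<lambda>q. pred_option (cycle_vertex_set k (set xs)) (fst q) \<and>
      colourful_table (set xs) (round_colour (i div k)) (round_source (i div k)) (snd q)"
  have "?inv (cc_between i (cc_run xs i))"
    using Suc.IH colourful_table_start_walks by (simp add: cc_between_def)
  then have "?inv (cc_run xs (Suc i))"
    unfolding cc_run_Suc
    by (rule foldl_invariant[rotated])
      (use assms colourful_table_extend_walks close_cycle_sound in \<open>auto simp: cc_step_def\<close>)
  moreover have "Suc i mod k \<noteq> 0 \<Longrightarrow> Suc i div k = i div k"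
    by (metis div_Suc)
  ultimately show ?case by auto
qed

lemma extend_walks_mono: "T x \<noteq> [] \<Longrightarrow> extend_walks \<chi> c T e x \<noteq> []"
  by (auto simp: extend_walks_def split: prod.split)

lemma extend_walks_along_edge:
  assumes "colourful_table G \<chi> src T" "T (s, w) \<noteq> []" "\<chi> w = Some c" "\<chi> u = Some (Suc c)"
    "Suc c < k" "u < n"
  shows "extend_walks \<chi> c T {w, u} (s, u) \<noteq> []"
proof -
  have "w \<noteq> u" using assms(3,4) by auto
  moreover have "length (T (s, w)) = Suc c"
    using assms(1-3) colourful_walk_length by (fastforce simp: colourful_table_def)
  ultimately show ?thesis
    using assms by (simp add: extend_walks_def other_end_insert)
qed

lemma close_cycle_finds: "closes_cycle \<chi> src T e x \<Longrightarrow> close_cycle \<chi> src T e found \<noteq> None"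
  by (cases x) (auto simp: close_cycle_def)

lemma cc_run_found_mono:
  assumes "fst (cc_run xs i) \<noteq> None" "i \<le> i'"
  shows "fst (cc_run xs i') \<noteq> None"
  using assms(2)
proof (induction i' rule: dec_induct)
  case (step i')
  then show ?case
    unfolding cc_run_Suc
    by (intro foldl_invariant[where P = "\<lambda>q. fst q \<noteq> None"])
      (auto simp: cc_between_def cc_step_def close_cycle_def)
qed (use assms(1) in simp)

context
  fixes xs :: "nat set list" and j s\<^sub>0 :: nat and f :: "nat \<Rightarrow> nat"
  assumes edges: "\<forall>e\<in>set xs. is_edge n e"
    and cycle: "cycle_copy k (set xs) f"
    and colourful: "\<forall>i<k. round_colour j (f i) = Some i"
    and source: "s\<^sub>0 < t" "round_source j s\<^sub>0 = f 0"
begin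

lemma round_reaches_cycle_vertices:
  assumes "c < k"
  shows "snd (cc_between (j * k + c) (cc_run xs (j * k + c))) (s\<^sub>0, f c) \<noteq> []"
  using assms
proof (induction c)
  case 0
  then show ?case
    using colourful source cycle_copy_vertex_less[OF cycle edges] by (simp add: cc_between_def start_walks_def)
next
  case (Suc c)
  let ?T = "round_colour j" and ?i = "j * k + c"
  have phase: "?i div k = j" "?i mod k = c" "Suc ?i mod k \<noteq> 0"
    using Suc.prems by auto
  have step: "cc_step ?i q e = (fst q, extend_walks ?T c (snd q) e)" for q e
    using phase Suc.prems by (simp add: cc_step_def)
  let ?P = "\<lambda>q. colourful_table (set xs) ?T (round_source j) (snd q) \<and> snd q (s\<^sub>0, f c) \<noteq> []"
  have "snd (foldl (cc_step ?i) (cc_between ?i (cc_run xs ?i)) xs) (s\<^sub>0, f (Suc c)) \<noteq> []"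
  proof (rule foldl_invariant_after_event[where P = ?P])
    show "{f c, f (Suc c)} \<in> set xs"
      using cycle Suc.prems unfolding cycle_copy_def by (metis Suc_lessD mod_less)
    show "?P (cc_between ?i (cc_run xs ?i))"
      using cc_run_sound[OF edges, of ?i] Suc phase
      by (auto simp: cc_between_def colourful_table_start_walks)
    show "snd (cc_step ?i q {f c, f (Suc c)}) (s\<^sub>0, f (Suc c)) \<noteq> []" if "?P q" for q
      using that step colourful Suc.prems cycle_copy_vertex_less[OF cycle edges]
        extend_walks_along_edge[of "set xs" "round_colour j" "round_source j" "snd q" s\<^sub>0 "f c" c "f (Suc c)"]
      by simp
  qed (use step edges in \<open>auto simp: colourful_table_extend_walks extend_walks_mono\<close>)
  then show ?case
    using phase by (simp add: cc_run_Suc cc_between_def)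
qed

lemma round_finds_cycle: "fst (cc_run xs (j * k + k)) \<noteq> None"
proof -
  obtain c where k: "Suc c = k"
    using two_le_k by (metis Suc_le_D numeral_2_eq_2)
  let ?i = "j * k + c"
  have "c < k"
    using k by simp
  then have phase: "?i div k = j" "?i mod k = c"
    by auto
  have step: "cc_step ?i q e =
      (close_cycle (round_colour j) (round_source j) (snd q) e (fst q), snd q)" for q e
    using phase k by (simp add: cc_step_def)
  have "f c \<noteq> f 0"
    using cycle two_le_k k unfolding cycle_copy_def by (auto dest: inj_onD)
  then have closes: "closes_cycle (round_colour j) (round_source j) T {f c, f 0} (s\<^sub>0, f c)"
    if "T (s\<^sub>0, f c) \<noteq> []" for T
    using that colourful source k by (simp add: closes_cycle_def)
  have "fst (foldl (cc_step ?i) (cc_between ?i (cc_run xs ?i)) xs) \<noteq> None"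
  proof (rule foldl_invariant_after_event[where P = "\<lambda>q. snd q (s\<^sub>0, f c) \<noteq> []"])
    show "{f c, f 0} \<in> set xs"
      using cycle k unfolding cycle_copy_def by auto
    show "snd (cc_between ?i (cc_run xs ?i)) (s\<^sub>0, f c) \<noteq> []"
      using round_reaches_cycle_vertices[of c] k by simp
    show "fst (cc_step ?i q {f c, f 0}) \<noteq> None" if "snd q (s\<^sub>0, f c) \<noteq> []" for q
      using close_cycle_finds[OF closes[of "snd q", OF that]] step by simp
  qed (use step in \<open>auto simp: close_cycle_def\<close>)
  then show ?thesis
    using k by (metis add_Suc_right cc_run_Suc)
qed

end

theorem cc_run_correct:
  assumes edges: "\<forall>e\<in>set xs. is_edge n e"
    and family: "\<And>f. inj_on f {0..<k} \<Longrightarrow> \<forall>i<k. f i < n \<Longrightarrow>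
      \<exists>\<phi>\<in>set fm. \<forall>i<k. colour \<phi> (f i) = Some i"
    and blocks: "n \<le> G * t" and passes: "G * length fm * k \<le> p"
  shows "correct_cycle_output k (set xs) (fst (cc_run xs p))"
proof (cases "fst (cc_run xs p)")
  case (Some V)
  then show ?thesis
    using cc_run_sound[OF edges, of p] by (simp add: correct_cycle_output_def)
next
  case None
  have "\<not> (\<exists>f. cycle_copy k (set xs) f)"
  proof
    assume "\<exists>f. cycle_copy k (set xs) f"
    then obtain f where cycle: "cycle_copy k (set xs) f" ..
    then have f_less: "\<forall>i<k. f i < n"
      using edges cycle_copy_vertex_less by blast
    moreover have "inj_on f {0..<k}"
      using cycle by (simp add: cycle_copy_def)
    ultimately obtain \<phi> where "\<phi> \<in> set fm" and colourful: "\<forall>i<k. colour \<phi> (f i) = Some i"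
      using family by blast
    then obtain a where a: "a < length fm" "fm ! a = \<phi>"
      by (metis in_set_conv_nth)
    have "f 0 < n"
      using f_less two_le_k by simp
    then have "f 0 < G * t"
      using blocks by linarith
    then have t: "0 < t" and block: "f 0 div t < G"
      by (cases t, simp_all add: less_mult_imp_div_less)
    define j where "j = f 0 div t * length fm + a"
    have "round_colour j = colour \<phi>"
      using a by (simp add: round_colour_def j_def)
    moreover have "j div length fm = f 0 div t"
      using a(1) unfolding j_def by (metis add.commute div_mult_self1 div_less add_0 gr_implies_not0)
    then have "round_source j (f 0 mod t) = f 0"
      by (simp add: round_source_def)
    ultimately have "fst (cc_run xs (j * k + k)) \<noteq> None"
      using colourful t by (intro round_finds_cycle[OF edges cycle, where s\<^sub>0 = "f 0 mod t"]) simp_all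
    moreover have "Suc j \<le> G * length fm"
    proof -
      have "Suc j \<le> Suc (f 0 div t) * length fm"
        using a by (simp add: j_def)
      also have "\<dots> \<le> G * length fm"
        using block by (intro mult_le_mono1) simp
      finally show ?thesis .
    qed
    then have "j * k + k \<le> p"
      using passes mult_le_mono1[of "Suc j" "G * length fm" k] by simp
    ultimately show False
      using cc_run_found_mono None by blast
  qed
  then show ?thesis
    using None by (simp add: correct_cycle_output_def)
qed

definition cc_states :: "cc_state set" where
  "cc_states = insert None (Some ` Pow {..<n}) \<times>
     {T. (\<forall>x\<in>{..<t} \<times> {..<n}. T x \<in> {ps. set ps \<subseteq> {..<n} \<and> length ps \<le> k}) \<and>
         (\<forall>x. x \<notin> {..<t} \<times> {..<n} \<longrightarrow> T x = [])}"

lemma cc_statesD: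
  assumes "q \<in> cc_states"
  shows "fst q \<in> insert None (Some ` Pow {..<n})"
    and "set (snd q x) \<subseteq> {..<n}" "length (snd q x) \<le> k"
    and "snd q (s, u) \<noteq> [] \<Longrightarrow> s < t \<and> u < n"
proof -
  from assms have found: "fst q \<in> insert None (Some ` Pow {..<n})"
    and inside: "\<And>x. x \<in> {..<t} \<times> {..<n} \<Longrightarrow> set (snd q x) \<subseteq> {..<n} \<and> length (snd q x) \<le> k"
    and outside: "\<And>x. x \<notin> {..<t} \<times> {..<n} \<Longrightarrow> snd q x = []"
    unfolding cc_states_def mem_Times_iff[of q] mem_Collect_eq by blast+
  show "fst q \<in> insert None (Some ` Pow {..<n})"
    by (fact found)
  show "set (snd q x) \<subseteq> {..<n}" "length (snd q x) \<le> k"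
    using inside[of x] outside[of x] by (cases "x \<in> {..<t} \<times> {..<n}"; simp)+
  show "snd q (s, u) \<noteq> [] \<Longrightarrow> s < t \<and> u < n"
    using outside[of "(s, u)"] by blast
qed

lemma cc_statesI:
  assumes "fst q \<in> insert None (Some ` Pow {..<n})"
    and "\<And>x. set (snd q x) \<subseteq> {..<n}" "\<And>x. length (snd q x) \<le> k"
    and "\<And>s u. snd q (s, u) \<noteq> [] \<Longrightarrow> s < t \<and> u < n"
  shows "q \<in> cc_states"
proof -
  have "\<forall>x. x \<notin> {..<t} \<times> {..<n} \<longrightarrow> snd q x = []"
    using assms(4) by (auto simp: split_paired_All)
  then show ?thesis
    using assms(1-3) unfolding cc_states_def mem_Times_iff[of q] mem_Collect_eq by blast
qed

lemma init_in_cc_states: "(None, \<lambda>_. []) \<in> cc_states"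
  by (rule cc_statesI) simp_all

lemma cc_between_in_cc_states:
  assumes "q \<in> cc_states"
  shows "cc_between i q \<in> cc_states"
proof (cases "i mod k = 0")
  case True
  then show ?thesis
    using cc_statesD(1)[OF assms] two_le_k
    by (intro cc_statesI) (auto simp: cc_between_def start_walks_def split: if_splits)
qed (simp add: cc_between_def assms)

lemma cc_step_in_cc_states:
  assumes "q \<in> cc_states"
  shows "cc_step i q e \<in> cc_states"
proof (cases "Suc (i mod k) < k")
  case True
  let ?T = "extend_walks (round_colour (i div k)) (i mod k) (snd q) e"
  have "set (?T (s, u)) \<subseteq> {..<n} \<and> length (?T (s, u)) \<le> k \<and> (?T (s, u) \<noteq> [] \<longrightarrow> s < t \<and> u < n)"
    for s u
    using cc_statesD(2-4)[OF assms] by (auto simp: extend_walks_def simp del: subset_iff)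
  then show ?thesis
    using True cc_statesD(1)[OF assms]
    by (intro cc_statesI) (auto simp: cc_step_def simp del: subset_iff)
next
  case False
  have "close_cycle \<chi> src (snd q) e (fst q) \<in> insert None (Some ` Pow {..<n})" for \<chi> src
    using cc_statesD(1,2)[OF assms] by (auto simp: close_cycle_def)
  then show ?thesis
    using False cc_statesD(2-4)[OF assms] by (intro cc_statesI) (auto simp: cc_step_def)
qed

lemma card_cc_states:
  assumes "n < 2 ^ b"
  shows "finite cc_states" "card cc_states \<le> 2 ^ (n + 1 + b * k * t * n)"
proof -
  let ?found = "insert None (Some ` Pow {..<n})"
  let ?walks = "{ps. set ps \<subseteq> {..<n} \<and> length ps \<le> k}"
  let ?tables = "{T. (\<forall>x\<in>{..<t} \<times> {..<n}. T x \<in> ?walks) \<and> (\<forall>x. x \<notin> {..<t} \<times> {..<n} \<longrightarrow> T x = [])}"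
  have fin_walks: "finite ?walks"
    using finite_lists_length_le[of "{..<n}" k] by simp
  have "card ?walks \<le> Suc n ^ k"
    using card_lists_length_le[of "{..<n}" k] sum_powers_le_Suc_power[where n = n and k = k] by simp
  also have "\<dots> \<le> 2 ^ (b * k)"
    using assms by (simp add: power_mult power_mono)
  finally have "card ?walks ^ (t * n) \<le> (2 ^ (b * k)) ^ (t * n)"
    by (rule power_mono) simp
  then have card_tables: "card ?tables \<le> 2 ^ (b * k * t * n)"
    using card_functions_with_default_le(2)[OF _ fin_walks, of "{..<t} \<times> {..<n}" "[]"]
    by (simp add: card_cartesian_product power_mult mult.assoc)
  have card_found: "card ?found \<le> 2 ^ (n + 1)"
    by (simp add: card_insert_if card_image card_Pow)
  have "finite ?tables"
    by (rule card_functions_with_default_le(1)[OF _ fin_walks]) simp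
  then show "finite cc_states"
    by (simp add: cc_states_def)
  have "card cc_states = card ?found * card ?tables"
    by (simp add: cc_states_def card_cartesian_product)
  also have "\<dots> \<le> 2 ^ (n + 1) * 2 ^ (b * k * t * n)"
    using card_found card_tables by (rule mult_le_mono)
  finally show "card cc_states \<le> 2 ^ (n + 1 + b * k * t * n)"
    by (simp add: power_add)
qed

end

theorem D_sub_cycle_le_colour_coding:
  assumes "2 \<le> k" "1 \<le> b" "n < 2 ^ b" "n \<le> G * t" "G * length (colourings k b) * k \<le> p"
  shows "D_sub_cycle k n p \<le> n + 1 + b * k * t * n"
proof -
  interpret colour_coding n k t "colourings k b"
    using assms(1) by unfold_locales
  show ?thesis
  proof (rule D_sub_cycle_le_of_state_space[where Q = cc_states and init = "(None, \<lambda>_. [])"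
        and step = cc_step and betw = cc_between and out = fst])
    fix xs :: "nat set list" assume edges: "\<forall>e\<in>set xs. is_edge n e"
    have "\<exists>\<phi>\<in>set (colourings k b). \<forall>i<k. colour \<phi> (f i) = Some i"
      if "inj_on f {0..<k}" "\<forall>i<k. f i < n" for f
      using colourful_colouring_exists[of k b f] that assms(1-3) by fastforce
    then show "correct_cycle_output k (set xs) (fst (run_passes (None, \<lambda>_. []) cc_step cc_between xs p))"
      using cc_run_correct[OF edges _ assms(4,5)] by (simp add: cc_run_def)
  qed (use card_cc_states[OF assms(3)] init_in_cc_states cc_between_in_cc_states
      cc_step_in_cc_states in auto)
qed

lemma D_sub_cycle_mult_le_many_passes:
  fixes c :: nat
  assumes k: "2 \<le> k" and b: "1 \<le> b" "n < 2 ^ b"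
    and p: "k * length (colourings k b) \<le> p" "p \<le> c * n"
  shows "D_sub_cycle k n p * p \<le> 4 * (c + 1) * k\<^sup>2 * b * length (colourings k b) * n\<^sup>2"
proof -
  let ?L = "length (colourings k b)"
  define m where "m = k * ?L"
  define G where "G = p div m"
  define t where "t = n div G + 1"
  have "1 \<le> ?L"
    using b(1) by (simp add: length_colourings)
  then have kL: "1 \<le> m" "1 \<le> k\<^sup>2 * b * ?L"
    using k b(1) by (simp_all add: m_def power2_eq_square)
  then have G: "0 < G"
    using p(1) by (auto simp: G_def m_def div_greater_zero_iff)
  have "G * (n div G) + n mod G = n" "n mod G < G"
    using G by simp_all
  then have "n \<le> G * t"
    unfolding t_def distrib_left mult_1_right by linarith
  moreover have "G * ?L * k \<le> p"
    using div_times_less_eq_dividend[of p m] by (simp add: G_def m_def ac_simps)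
  ultimately have D: "D_sub_cycle k n p \<le> n + 1 + b * k * t * n"
    using D_sub_cycle_le_colour_coding k b by blast
  have "G * m + p mod m = p"
    unfolding G_def by (rule div_mult_mod_eq)
  moreover have "p mod m < m"
    using kL(1) by (intro mod_less_divisor) linarith
  ultimately have "p < (G + 1) * m"
    unfolding distrib_right mult_1_left by linarith
  also have "\<dots> \<le> (2 * G) * m"
    using G by (intro mult_le_mono1) simp
  finally have p_le: "p \<le> 2 * G * k * ?L"
    by (simp add: m_def ac_simps)
  have "G \<le> p"
    by (simp add: G_def)
  then have tG: "t * G \<le> (c + 1) * n"
    using p(2) div_times_less_eq_dividend[of n G]
    unfolding t_def distrib_right mult_1_left by linarith
  have "n \<ge> 1"
    using p kL(1) by (cases n) (simp_all add: m_def)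
  then have "(n + 1) * p \<le> 2 * c * n\<^sup>2"
    using p(2) mult_le_mono[of "n + 1" "2 * n" p "c * n"] by (simp add: power2_eq_square ac_simps)
  moreover have "2 * c \<le> 2 * (c + 1) * (k\<^sup>2 * b * ?L)"
    using mult_le_mono2[OF kL(2), of "2 * (c + 1)"] by simp
  ultimately have small: "(n + 1) * p \<le> 2 * (c + 1) * (k\<^sup>2 * b * ?L) * n\<^sup>2"
    using mult_le_mono1 order_trans by blast
  have "D_sub_cycle k n p * p \<le> (n + 1) * p + b * k * t * n * p"
    using mult_le_mono1[OF D, of p] by (simp add: add_mult_distrib)
  also have "b * k * t * n * p \<le> b * k * t * n * (2 * G * k * ?L)"
    using p_le by (rule mult_le_mono2)
  also have "\<dots> = 2 * b * k\<^sup>2 * ?L * n * (t * G)"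
    by (simp add: power2_eq_square ac_simps)
  also have "\<dots> \<le> 2 * b * k\<^sup>2 * ?L * n * ((c + 1) * n)"
    using tG by (rule mult_le_mono2)
  also have "(n + 1) * p + 2 * b * k\<^sup>2 * ?L * n * ((c + 1) * n)
      \<le> 4 * (c + 1) * k\<^sup>2 * b * ?L * n\<^sup>2"
    using small by (simp add: power2_eq_square algebra_simps)
  finally show ?thesis by simp
qed

lemma D_sub_cycle_mult_le:
  fixes c :: nat
  assumes k: "2 \<le> k" and b: "1 \<le> b" "n < 2 ^ b" and p: "1 \<le> p" "p \<le> c * n"
  shows "D_sub_cycle k n p * p \<le> 4 * (c + 1) * k\<^sup>2 * b * length (colourings k b) * n\<^sup>2"
proof (cases "k * length (colourings k b) \<le> p")
  case False
  let ?m = "k * length (colourings k b)"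
  have "D_sub_cycle k n p * p \<le> n * n * ?m"
    using False D_sub_cycle_le_square[OF p(1)] by (intro mult_le_mono) simp_all
  also have "\<dots> \<le> (4 * (c + 1) * k * b) * (n * n * ?m)"
    using k b(1) by simp
  also have "\<dots> = 4 * (c + 1) * k\<^sup>2 * b * length (colourings k b) * n\<^sup>2"
    by (simp add: power2_eq_square ac_simps)
  finally show ?thesis .
qed (use D_sub_cycle_mult_le_many_passes assms in blast)

lemma floor_log_Suc_le_ln:
  assumes "2 \<le> n"
  shows "real (floor_log n + 1) \<le> 2 / ln 2 * ln (real n)"
proof -
  have one_le: "1 \<le> log 2 (real n)"
    using assms by simp
  have "real (floor_log n) \<le> log 2 (real n)"
    using assms one_le by (simp add: floor_log_altdef)
  then have "real (floor_log n + 1) \<le> 2 * log 2 (real n)"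
    using one_le by simp
  then show ?thesis
    by (simp add: log_def)
qed

theorem D_sub_cycle_le_polylog:
  fixes c :: nat
  assumes "2 \<le> k" "2 \<le> n" "1 \<le> p" "p \<le> c * n"
  shows "real (D_sub_cycle k n p)
    \<le> 4 * (c + 1) * k\<^sup>2 * 2 ^ ((k - 1) * k) * (2 / ln 2) ^ k * (real n)\<^sup>2 / real p * ln (real n) ^ k"
proof -
  define b where "b = floor_log n + 1"
  define A :: real where "A = real (4 * (c + 1) * k\<^sup>2 * 2 ^ ((k - 1) * k))"
  have b: "1 \<le> b" "n < 2 ^ b"
    using floor_log_exp2_gt[of n] by (simp_all add: b_def)
  have bL: "b * length (colourings k b) = 2 ^ ((k - 1) * k) * b ^ k"
    using assms(1) by (cases k) (simp_all add: length_colourings)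
  have "D_sub_cycle k n p * p \<le> 4 * (c + 1) * k\<^sup>2 * (b * length (colourings k b)) * n\<^sup>2"
    using D_sub_cycle_mult_le[OF assms(1) b assms(3,4)] by (simp only: mult.assoc)
  also have "\<dots> = 4 * (c + 1) * k\<^sup>2 * 2 ^ ((k - 1) * k) * b ^ k * n\<^sup>2"
    unfolding bL by (simp only: mult.assoc)
  finally have "real (D_sub_cycle k n p) * real p \<le> A * real b ^ k * (real n)\<^sup>2"
    unfolding A_def by (simp only: of_nat_le_iff flip: of_nat_mult of_nat_power)
  also have "\<dots> \<le> A * (2 / ln 2 * ln (real n)) ^ k * (real n)\<^sup>2"
    using floor_log_Suc_le_ln[OF assms(2)]
    by (intro mult_right_mono mult_left_mono power_mono) (simp_all add: A_def b_def)
  also have "\<dots> = A * ((2 / ln 2) ^ k * ln (real n) ^ k) * (real n)\<^sup>2"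
    by (simp only: power_mult_distrib)
  finally have "real (D_sub_cycle k n p) \<le> A * ((2 / ln 2) ^ k * ln (real n) ^ k) * (real n)\<^sup>2 / real p"
    using assms(3) by (simp add: pos_le_divide_eq)
  then show ?thesis
    by (simp add: A_def mult_ac)
qed

theorem proposition15:
  fixes l :: nat
  assumes "l \<ge> 1"
  shows "\<forall>c::real. c > 0 \<longrightarrow> (\<exists>(C::real) (k::nat). \<forall>n p. n \<ge> 2 \<and> p \<ge> 1 \<and> real p \<le> c * real n \<longrightarrow>
           real (D_sub_cycle (2 * l + 1) n p) \<le> C * (real n)^2 / real p * (ln (real n)) ^ k)"
proof (intro allI impI)
  fix c :: real
  define k where "k = 2 * l + 1"
  define c' where "c' = nat \<lceil>c\<rceil>"
  have k: "2 \<le> k"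
    using assms by (simp add: k_def)
  have passes: "p \<le> c' * n" if "real p \<le> c * real n" for n p
  proof -
    have "real p \<le> real c' * real n"
      using that real_nat_ceiling_ge[of c] by (simp add: c'_def) (meson mult_right_mono of_nat_0_le_iff order_trans)
    then show ?thesis
      by (simp flip: of_nat_mult)
  qed
  show "\<exists>(C::real) (K::nat). \<forall>n p. n \<ge> 2 \<and> p \<ge> 1 \<and> real p \<le> c * real n \<longrightarrow>
      real (D_sub_cycle (2 * l + 1) n p) \<le> C * (real n)^2 / real p * (ln (real n)) ^ K"
    using D_sub_cycle_le_polylog[OF k _ _ passes] unfolding k_def by blast
qed

end
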